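(* Consider a batch contextual bandit with finite context space $\mathcal{S}$, finite action space $\mathcal{A}$, context distribution $d_0$, reward distributions $R(s,a)\in\Delta([0,R_{\max}])$, behavior policy $\pi_b$, $\mu:=d_0\times\pi_b$, and a finite class $\mathcal{F}$ of functions $\mathcal{S}\times\mathcal{A}\to[0,R_{\max}]$. Let $\hat f\in\mathcal{F}$ satisfy $\mathcal{L}_\mu(\hat f)-\min_{f\in\mathcal{F}}\mathcal{L}_\mu(f)\le\epsilon$. Assume: (a) there is $C<+\infty$ such that for all $f,f'\in\mathcal{F}$ and every admissible $\nu$, $\|f-f'\|_\nu^2\le C\,\|f-f'\|_\mu^2$; (b) there exists a valid reward function $f^\star\in\mathcal{F}$, i.e. $f^\star$ satisfies $\mathbb{E}_{(s,a)\sim\nu}[f^\star(s,a)]=\mathbb{E}_{(s,a)\sim\nu,\,r\sim R(s,a)}[r]$ for every admissible $\nu$, and $\mathcal{L}_\mu(f')-\mathcal{L}_\mu(f^\star)=\|f'-f^\star\|_\mu^2$ for every $f'\in\mathcal{F}$. Then for any valid reward function $f^\star$ (in the sense of (b)), $$v^{\pi_{\hat f}}\ \ge\ v^{\pi_{f^\star}}-2\sqrt{C\epsilon}.$$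
   Context: Data: $s\sim d_0$, $a\sim\pi_b(\cdot\mid s)$, $r\sim R(s,a)$; $\mu$ is the joint law of $(s,a)$. $\mathcal{L}_\mu(f):=\mathbb{E}_{(s,a)\sim\mu,\,r\sim R(s,a)}[(f(s,a)-r)^2]$. $\|g\|_\nu^2:=\mathbb{E}_{(s,a)\sim\nu}[g(s,a)^2]$. $\pi_f$ is the greedy policy $s\mapsto\arg\max_af(s,a)$ (fixed tie-breaking). The admissible distributions are the distributions $d_0\times\pi_f$ (i.e. $s\sim d_0$, $a=\pi_f(s)$) for $f\in\mathcal{F}$. $v^\pi:=\mathbb{E}_{s\sim d_0,\,r\sim R(s,\pi(s))}[r]$. *)

theory Defs
  imports "HOL-Probability.Probability"
begin

definition mu_dist :: "'s pmf \<Rightarrow> ('s \<Rightarrow> 'a pmf) \<Rightarrow> ('s \<times> 'a) pmf" where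
  "mu_dist d0 pib = bind_pmf d0 (\<lambda>s. map_pmf (\<lambda>a. (s, a)) (pib s))"

definition policy_dist :: "'s pmf \<Rightarrow> ('s \<Rightarrow> 'a) \<Rightarrow> ('s \<times> 'a) pmf" where
  "policy_dist d0 \<pi> = map_pmf (\<lambda>s. (s, \<pi> s)) d0"

definition admissible ::
  "'s pmf \<Rightarrow> (('s \<Rightarrow> 'a \<Rightarrow> real) \<Rightarrow> 's \<Rightarrow> 'a) \<Rightarrow> ('s \<Rightarrow> 'a \<Rightarrow> real) set \<Rightarrow> ('s \<times> 'a) pmf set" where
  "admissible d0 greedy F = (\<lambda>f. policy_dist d0 (greedy f)) ` F"

definition sq_loss :: "('s \<times> 'a) pmf \<Rightarrow> ('s \<Rightarrow> 'a \<Rightarrow> real pmf) \<Rightarrow> ('s \<Rightarrow> 'a \<Rightarrow> real) \<Rightarrow> real" where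
  "sq_loss nu R f = measure_pmf.expectation nu
      (\<lambda>(s, a). measure_pmf.expectation (R s a) (\<lambda>r. (f s a - r)\<^sup>2))"

definition sq_norm :: "('s \<times> 'a) pmf \<Rightarrow> ('s \<Rightarrow> 'a \<Rightarrow> real) \<Rightarrow> real" where
  "sq_norm nu g = measure_pmf.expectation nu (\<lambda>(s, a). (g s a)\<^sup>2)"

definition policy_value :: "'s pmf \<Rightarrow> ('s \<Rightarrow> 'a \<Rightarrow> real pmf) \<Rightarrow> ('s \<Rightarrow> 'a) \<Rightarrow> real" where
  "policy_value d0 R \<pi> = measure_pmf.expectation d0 (\<lambda>s. measure_pmf.expectation (R s (\<pi> s)) (\<lambda>r. r))"

definition valid_reward ::
  "'s pmf \<Rightarrow> ('s \<Rightarrow> 'a pmf) \<Rightarrow> ('s \<Rightarrow> 'a \<Rightarrow> real pmf) \<Rightarrow> (('s \<Rightarrow> 'a \<Rightarrow> real) \<Rightarrow> 's \<Rightarrow> 'a)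
    \<Rightarrow> ('s \<Rightarrow> 'a \<Rightarrow> real) set \<Rightarrow> ('s \<Rightarrow> 'a \<Rightarrow> real) \<Rightarrow> bool" where
  "valid_reward d0 pib R greedy F fs \<longleftrightarrow>
     (\<forall>nu \<in> admissible d0 greedy F.
        measure_pmf.expectation nu (\<lambda>(s, a). fs s a)
        = measure_pmf.expectation nu (\<lambda>(s, a). measure_pmf.expectation (R s a) (\<lambda>r. r)))
   \<and> (\<forall>f' \<in> F. sq_loss (mu_dist d0 pib) R f' - sq_loss (mu_dist d0 pib) R fs
                = sq_norm (mu_dist d0 pib) (\<lambda>s a. f' s a - fs s a))"

end

theory Submission
  imports Defs
begin

(* Validity of fstar turns the value of every greedy policy into its plug-in value under fstar,
   and it turns the ERM gap into ||fhat - fstar||_mu^2 <= eps. Concentrability and Jensen then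
   make the plug-in values under fhat and fstar differ by at most sqrt (C eps) on every admissible
   distribution. Comparing the values of greedy fhat and greedy fstar under fstar by passing
   through fhat, for which greedy fhat is optimal, costs this error twice.
   Since contexts and actions range over finite types, every expectation here is integrable. *)

definition model_value :: "'s pmf \<Rightarrow> ('s \<Rightarrow> 'a \<Rightarrow> real) \<Rightarrow> ('s \<Rightarrow> 'a) \<Rightarrow> real" where
  "model_value d0 h \<pi> = measure_pmf.expectation d0 (\<lambda>s. h s (\<pi> s))"

lemma integrable_measure_pmf_finite_type:
  "integrable (measure_pmf (M :: 'x::finite pmf)) (f :: 'x \<Rightarrow> real)"
  by (rule integrable_measure_pmf_finite) simp

lemma abs_expectation_le_sqrt_second_moment:
  fixes M :: "'x::finite pmf" and g :: "'x \<Rightarrow> real"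
  shows "\<bar>measure_pmf.expectation M g\<bar> \<le> sqrt (measure_pmf.expectation M (\<lambda>x. (g x)\<^sup>2))"
proof -
  have "measure_pmf.variance M g
      = measure_pmf.expectation M (\<lambda>x. (g x)\<^sup>2) - (measure_pmf.expectation M g)\<^sup>2"
    by (rule measure_pmf.variance_eq) (auto intro: integrable_measure_pmf_finite_type)
  with measure_pmf.variance_positive[of M g]
  have "(measure_pmf.expectation M g)\<^sup>2 \<le> measure_pmf.expectation M (\<lambda>x. (g x)\<^sup>2)"
    by simp
  then show ?thesis
    by (metis real_sqrt_abs real_sqrt_le_mono)
qed

lemma expectation_policy_dist:
  "measure_pmf.expectation (policy_dist d0 \<pi>) (\<lambda>(s, a). h s a) = model_value d0 h \<pi>"
  by (simp add: policy_dist_def model_value_def)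

lemma sq_norm_policy_dist:
  "sq_norm (policy_dist d0 \<pi>) h = measure_pmf.expectation d0 (\<lambda>s. (h s (\<pi> s))\<^sup>2)"
  by (simp add: policy_dist_def sq_norm_def)

lemma model_value_diff:
  fixes d0 :: "'s::finite pmf"
  shows "model_value d0 (\<lambda>s a. g s a - h s a) \<pi> = model_value d0 g \<pi> - model_value d0 h \<pi>"
  unfolding model_value_def
  by (rule Bochner_Integration.integral_diff) (auto intro: integrable_measure_pmf_finite_type)

lemma model_value_le_greedy:
  fixes d0 :: "'s::finite pmf"
  assumes "\<And>s a. h s a \<le> h s (greedy s)"
  shows "model_value d0 h \<pi> \<le> model_value d0 h greedy"
  unfolding model_value_def
  by (rule integral_mono) (auto intro: integrable_measure_pmf_finite_type assms)

lemma policy_dist_greedy_admissible: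
  "f \<in> F \<Longrightarrow> policy_dist d0 (greedy f) \<in> admissible d0 greedy F"
  unfolding admissible_def by blast

lemma policy_value_eq_model_value:
  assumes "valid_reward d0 pib R greedy F fs" and "f \<in> F"
  shows "policy_value d0 R (greedy f) = model_value d0 fs (greedy f)"
proof -
  have adm: "policy_dist d0 (greedy f) \<in> admissible d0 greedy F"
    using \<open>f \<in> F\<close> by (rule policy_dist_greedy_admissible)
  have "policy_value d0 R (greedy f) = measure_pmf.expectation (policy_dist d0 (greedy f))
      (\<lambda>(s, a). measure_pmf.expectation (R s a) (\<lambda>r. r))"
    by (simp add: expectation_policy_dist model_value_def policy_value_def)
  also have "\<dots> = measure_pmf.expectation (policy_dist d0 (greedy f)) (\<lambda>(s, a). fs s a)"
    using assms(1) adm unfolding valid_reward_def by simp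
  finally show ?thesis
    by (simp add: expectation_policy_dist)
qed

lemma sq_norm_le_excess_loss:
  assumes "valid_reward d0 pib R greedy F fs" and "fs \<in> F" "f \<in> F" "finite F"
    and "sq_loss (mu_dist d0 pib) R f - Min (sq_loss (mu_dist d0 pib) R ` F) \<le> eps"
  shows "sq_norm (mu_dist d0 pib) (\<lambda>s a. f s a - fs s a) \<le> eps"
proof -
  have "sq_norm (mu_dist d0 pib) (\<lambda>s a. f s a - fs s a)
      = sq_loss (mu_dist d0 pib) R f - sq_loss (mu_dist d0 pib) R fs"
    using assms(1,3) unfolding valid_reward_def by simp
  moreover have "Min (sq_loss (mu_dist d0 pib) R ` F) \<le> sq_loss (mu_dist d0 pib) R fs"
    using assms(2,4) by simp
  ultimately show ?thesis
    using assms(5) by linarith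
qed

lemma abs_model_value_diff_le:
  fixes d0 :: "'s::finite pmf"
  assumes concentrability: "\<And>nu. nu \<in> admissible d0 greedy F \<Longrightarrow>
      sq_norm nu (\<lambda>s a. f s a - f' s a) \<le> C * sq_norm (mu_dist d0 pib) (\<lambda>s a. f s a - f' s a)"
    and "sq_norm (mu_dist d0 pib) (\<lambda>s a. f s a - f' s a) \<le> eps" "0 \<le> C" "g \<in> F"
  shows "\<bar>model_value d0 f (greedy g) - model_value d0 f' (greedy g)\<bar> \<le> sqrt (C * eps)"
proof -
  have "\<bar>model_value d0 f (greedy g) - model_value d0 f' (greedy g)\<bar>
      = \<bar>model_value d0 (\<lambda>s a. f s a - f' s a) (greedy g)\<bar>"
    by (simp add: model_value_diff)
  also have "\<dots> \<le> sqrt (sq_norm (policy_dist d0 (greedy g)) (\<lambda>s a. f s a - f' s a))"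
    unfolding model_value_def sq_norm_policy_dist
    by (rule abs_expectation_le_sqrt_second_moment)
  also have "\<dots> \<le> sqrt (C * eps)"
    using concentrability[OF policy_dist_greedy_admissible[OF \<open>g \<in> F\<close>]] assms(2,3)
    by (meson order_trans mult_left_mono real_sqrt_le_mono)
  finally show ?thesis .
qed

theorem theorem3:
  fixes d0 :: "'s::finite pmf"
    and pib :: "'s \<Rightarrow> 'a::finite pmf"
    and R :: "'s \<Rightarrow> 'a \<Rightarrow> real pmf"
    and Rmax :: real
    and F :: "('s \<Rightarrow> 'a \<Rightarrow> real) set"
    and greedy :: "('s \<Rightarrow> 'a \<Rightarrow> real) \<Rightarrow> 's \<Rightarrow> 'a"
    and fhat fstar :: "'s \<Rightarrow> 'a \<Rightarrow> real"
    and eps C :: real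
  assumes R_range: "\<And>s a. set_pmf (R s a) \<subseteq> {0..Rmax}"
    and F_finite: "finite F"
    and F_range: "\<And>f s a. f \<in> F \<Longrightarrow> f s a \<in> {0..Rmax}"
    and greedy_max: "\<And>f s a. f s a \<le> f s (greedy f s)"
    and fhat_in: "fhat \<in> F"
    and fhat_erm: "sq_loss (mu_dist d0 pib) R fhat - Min (sq_loss (mu_dist d0 pib) R ` F) \<le> eps"
    and C_nonneg: "0 \<le> C"
    and concentrability: "\<And>f f' nu. f \<in> F \<Longrightarrow> f' \<in> F \<Longrightarrow> nu \<in> admissible d0 greedy F \<Longrightarrow>
         sq_norm nu (\<lambda>s a. f s a - f' s a) \<le> C * sq_norm (mu_dist d0 pib) (\<lambda>s a. f s a - f' s a)"
    and realizable: "\<exists>g \<in> F. valid_reward d0 pib R greedy F g"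
    and fstar_in: "fstar \<in> F"
    and fstar_valid: "valid_reward d0 pib R greedy F fstar"
  shows "policy_value d0 R (greedy fhat) \<ge> policy_value d0 R (greedy fstar) - 2 * sqrt (C * eps)"
proof -
  have close: "\<bar>model_value d0 fhat (greedy g) - model_value d0 fstar (greedy g)\<bar> \<le> sqrt (C * eps)"
    if "g \<in> F" for g
    using abs_model_value_diff_le[OF concentrability[OF fhat_in fstar_in]
        sq_norm_le_excess_loss[OF fstar_valid fstar_in fhat_in F_finite fhat_erm] C_nonneg that] .
  have "policy_value d0 R (greedy fstar) = model_value d0 fstar (greedy fstar)"
    using policy_value_eq_model_value[OF fstar_valid fstar_in] .
  also have "\<dots> \<le> model_value d0 fhat (greedy fstar) + sqrt (C * eps)"
    using close[OF fstar_in] by linarith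
  also have "\<dots> \<le> model_value d0 fhat (greedy fhat) + sqrt (C * eps)"
    using model_value_le_greedy[of fhat "greedy fhat"] greedy_max by simp
  also have "\<dots> \<le> model_value d0 fstar (greedy fhat) + 2 * sqrt (C * eps)"
    using close[OF fhat_in] by linarith
  also have "\<dots> = policy_value d0 R (greedy fhat) + 2 * sqrt (C * eps)"
    using policy_value_eq_model_value[OF fstar_valid fhat_in] by simp
  finally show ?thesis
    by linarith
qed

end
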